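(* Let $\mathcal{D}$ be an abstract system of proof notations and $s\in\mathbb{N}$. If $\mathcal{D}$ is $s$-bounded and $d\in\mathbb{E}(\mathcal{D})$, then every $d'\in\mathbb{E}(\mathcal{D})$ with $d\to^\ast d'$ (reflexive transitive closure of $\to$ in $\mathbb{E}(\mathcal{D})$) satisfies $|d'|\le\vartheta_d(s)$; i.e. the set $\{d'\in\mathbb{E}(\mathcal{D}): d\to^\ast d'\}$ is $\vartheta_d(s)$-bounded.
   Context: An abstract system of proof notations is a set $\mathcal{D}$ with functions $|\cdot|,o(\cdot)\colon\mathcal{D}\to\mathbb{N}\setminus\{0\}$ (size and height) and a relation $\to\subseteq\mathcal{D}\times\mathcal{D}$ such that $d\to d'$ implies $o(d')<o(d)$. The cut-elimination closure $\mathbb{E}(\mathcal{D})$ is the abstract system of formal terms inductively generated by: every $d\in\mathcal{D}$ is in $\mathbb{E}(\mathcal{D})$ (with size and height inherited); if $d,e\in\mathbb{E}(\mathcal{D})$ then $\mathsf{I}d,\ \mathsf{R}de,\ \mathsf{E}d\in\mathbb{E}(\mathcal{D})$ ($\mathsf I,\mathsf R,\mathsf E$ new symbols), with $|\mathsf Id|=|d|+1$, $|\mathsf Rde|=|d|+|e|+1$, $|\mathsf Ed|=|d|+1$, $o(\mathsf Id)=o(d)$, $o(\mathsf Rde)=o(d)+o(e)$, $o(\mathsf Ed)=2^{o(d)}-1$. The relation $\to$ on $\mathbb{E}(\mathcal{D})$ is inductively generated by: $d\to d'$ in $\mathcal{D}$ implies $d\to d'$; $d\to d'$ implies $\mathsf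 Id\to\mathsf Id'$; $e\to e'$ implies $\mathsf Rde\to\mathsf Rde'$; $d\to d'$ implies $\mathsf Ed\to\mathsf Ed'$; $\mathsf Rde\to\mathsf Id$ always; and $d\to d'$ together with $d\to d''$ implies $\mathsf Ed\to\mathsf R(\mathsf Ed')(\mathsf Ed'')$. The size function $\vartheta_d\colon\mathbb{N}\to\mathbb{N}$ for $d\in\mathbb{E}(\mathcal{D})$ is defined by recursion: $\vartheta_d(s)=s$ for $d\in\mathcal{D}$; $\vartheta_{\mathsf Id}(s)=\vartheta_d(s)+1$; $\vartheta_{\mathsf Rde}(s)=\max\{|d|+1+\vartheta_e(s),\ \vartheta_d(s)+1\}$; $\vartheta_{\mathsf Ed}(s)=o(d)\cdot(\vartheta_d(s)+2)$. A set of notations is called $s$-bounded if all its elements have size at most $s$. *)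

theory Defs
  imports Main
begin

definition abstract_system ::
  "'d set \<Rightarrow> ('d \<Rightarrow> nat) \<Rightarrow> ('d \<Rightarrow> nat) \<Rightarrow> ('d \<Rightarrow> 'd \<Rightarrow> bool) \<Rightarrow> bool" where
  "abstract_system D sz ht st \<longleftrightarrow>
     (\<forall>d\<in>D. sz d > 0 \<and> ht d > 0) \<and>
     (\<forall>d\<in>D. \<forall>d'\<in>D. st d d' \<longrightarrow> ht d' < ht d)"

datatype 'd eterm = Base 'd | I "'d eterm" | R "'d eterm" "'d eterm" | E "'d eterm"

inductive in_E :: "'d set \<Rightarrow> 'd eterm \<Rightarrow> bool" for D where
  base: "d \<in> D \<Longrightarrow> in_E D (Base d)"
| I: "in_E D d \<Longrightarrow> in_E D (I d)"
| R: "in_E D d \<Longrightarrow> in_E D e \<Longrightarrow> in_E D (R d e)"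
| E: "in_E D d \<Longrightarrow> in_E D (E d)"

definition EE :: "'d set \<Rightarrow> 'd eterm set" where
  "EE D = {d. in_E D d}"

fun esize :: "('d \<Rightarrow> nat) \<Rightarrow> 'd eterm \<Rightarrow> nat" where
  "esize sz (Base d) = sz d"
| "esize sz (I d) = esize sz d + 1"
| "esize sz (R d e) = esize sz d + esize sz e + 1"
| "esize sz (E d) = esize sz d + 1"

fun eht :: "('d \<Rightarrow> nat) \<Rightarrow> 'd eterm \<Rightarrow> nat" where
  "eht ht (Base d) = ht d"
| "eht ht (I d) = eht ht d"
| "eht ht (R d e) = eht ht d + eht ht e"
| "eht ht (E d) = 2 ^ eht ht d - 1"

inductive estep :: "'d set \<Rightarrow> ('d \<Rightarrow> 'd \<Rightarrow> bool) \<Rightarrow> 'd eterm \<Rightarrow> 'd eterm \<Rightarrow> bool"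
  for D st where
  base: "d \<in> D \<Longrightarrow> d' \<in> D \<Longrightarrow> st d d' \<Longrightarrow> estep D st (Base d) (Base d')"
| I: "estep D st d d' \<Longrightarrow> estep D st (I d) (I d')"
| R: "in_E D d \<Longrightarrow> estep D st e e' \<Longrightarrow> estep D st (R d e) (R d e')"
| E: "estep D st d d' \<Longrightarrow> estep D st (E d) (E d')"
| RI: "in_E D d \<Longrightarrow> in_E D e \<Longrightarrow> estep D st (R d e) (I d)"
| ER: "estep D st d d' \<Longrightarrow> estep D st d d'' \<Longrightarrow> estep D st (E d) (R (E d') (E d''))"

fun vartheta :: "('d \<Rightarrow> nat) \<Rightarrow> ('d \<Rightarrow> nat) \<Rightarrow> 'd eterm \<Rightarrow> nat \<Rightarrow> nat" where
  "vartheta sz ht (Base d) s = s"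
| "vartheta sz ht (I d) s = vartheta sz ht d s + 1"
| "vartheta sz ht (R d e) s = max (esize sz d + 1 + vartheta sz ht e s) (vartheta sz ht d s + 1)"
| "vartheta sz ht (E d) s = eht ht d * (vartheta sz ht d s + 2)"

definition bounded :: "('a \<Rightarrow> nat) \<Rightarrow> 'a set \<Rightarrow> nat \<Rightarrow> bool" where
  "bounded sz A s \<longleftrightarrow> (\<forall>a\<in>A. sz a \<le> s)"

end

theory Submission
  imports Defs
begin

text \<open>Heights positive on \<open>\<D>\<close> stay positive on the closure, so \<open>|d| \<le> \<vartheta>\<^sub>d(s)\<close> holds for
  every term of the closure. A reduction step strictly lowers the height and never raises
  \<open>\<vartheta>\<close>. In the only delicate case, \<open>E d \<rightarrow> R (E d') (E d'')\<close>, the factor \<open>o(d)\<close> in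
  \<open>\<vartheta>\<^bsub>E d\<^esub>(s) = o(d) (\<vartheta>\<^sub>d(s) + 2)\<close> pays for the extra size, because
  \<open>o(d'), o(d'') \<le> o(d) - 1\<close>; and \<open>2\<^sup>a - 1 + 2\<^sup>b - 1 < 2\<^sup>m - 1\<close> for \<open>a, b < m\<close> keeps the
  height decreasing.\<close>

lemma estep_in_E: "estep D st d d' \<Longrightarrow> in_E D d \<and> in_E D d'"
  by (induction rule: estep.induct) (auto intro: in_E.intros)

lemma eht_pos:
  assumes "\<forall>x\<in>D. 0 < ht x"
  shows "in_E D d \<Longrightarrow> 0 < eht ht d"
proof (induction rule: in_E.induct)
  case (E d)
  then have "(1::nat) < 2 ^ eht ht d" using one_less_power[of "2::nat"] by simp
  then show ?case by simp
qed (use assms in auto)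

lemma esize_le_vartheta:
  assumes "\<forall>x\<in>D. 0 < ht x" and "bounded sz D s"
  shows "in_E D d \<Longrightarrow> esize sz d \<le> vartheta sz ht d s"
proof (induction rule: in_E.induct)
  case (base d)
  then show ?case using assms(2) by (simp add: bounded_def)
next
  case (E d)
  have "vartheta sz ht d s + 2 \<le> eht ht d * (vartheta sz ht d s + 2)"
    using eht_pos[OF assms(1) E(1)] mult_le_mono1[of 1 "eht ht d"] by (simp only: mult_1)
  then show ?case using E by simp
qed auto

lemma two_pow_minus_one_add_less:
  assumes "a < m" and "b < m"
  shows "(2::nat) ^ a - 1 + (2 ^ b - 1) < 2 ^ m - 1"
proof -
  have "(2::nat) ^ a \<le> 2 ^ (m - 1)" "(2::nat) ^ b \<le> 2 ^ (m - 1)"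
    using assms by (auto intro: power_increasing)
  moreover have "(2::nat) ^ m = 2 * 2 ^ (m - 1)"
    using assms by (simp flip: power_Suc)
  moreover have "(1::nat) \<le> 2 ^ a" "(1::nat) \<le> 2 ^ b" by simp_all
  ultimately show ?thesis by linarith
qed

lemma estep_eht_less:
  assumes "abstract_system D sz ht st"
  shows "estep D st d d' \<Longrightarrow> eht ht d' < eht ht d"
proof (induction rule: estep.induct)
  case (base d d')
  then show ?case using assms by (simp add: abstract_system_def)
next
  case (E d d')
  have "(2::nat) ^ eht ht d' < 2 ^ eht ht d" using E.IH by simp
  moreover have "(1::nat) \<le> 2 ^ eht ht d'" by simp
  ultimately show ?case by (simp only: eht.simps)
next
  case (RI d e)
  have "\<forall>x\<in>D. 0 < ht x" using assms by (simp add: abstract_system_def)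
  then have "0 < eht ht e" using eht_pos RI(2) by blast
  then show ?case by simp
next
  case (ER d d' d'')
  then show ?case using two_pow_minus_one_add_less[OF ER.IH] by (simp only: eht.simps)
qed simp_all

lemma estep_vartheta_le:
  assumes "abstract_system D sz ht st" and "bounded sz D s"
  shows "estep D st d d' \<Longrightarrow> vartheta sz ht d' s \<le> vartheta sz ht d s"
proof (induction rule: estep.induct)
  case (E d d')
  have "eht ht d' \<le> eht ht d" using estep_eht_less[OF assms(1) E(1)] by simp
  then have "eht ht d' * (vartheta sz ht d' s + 2) \<le> eht ht d * (vartheta sz ht d s + 2)"
    using E.IH by (intro mult_le_mono) simp_all
  then show ?case by (simp only: vartheta.simps)
next
  case (ER d d' d'')
  let ?v = "vartheta sz ht d s" and ?m = "eht ht d"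
  have ht_pos: "\<forall>x\<in>D. 0 < ht x" using assms(1) by (simp add: abstract_system_def)
  have heights: "eht ht d' \<le> ?m - 1" "eht ht d'' \<le> ?m - 1"
    using estep_eht_less[OF assms(1) ER(1)] estep_eht_less[OF assms(1) ER(2)] by linarith+
  have "in_E D d" "in_E D d'" using estep_in_E[OF ER(1)] by simp_all
  have "esize sz d' \<le> ?v"
    using esize_le_vartheta[OF ht_pos assms(2) \<open>in_E D d'\<close>] ER.IH(1) by linarith
  moreover have "eht ht d'' * (vartheta sz ht d'' s + 2) \<le> (?m - 1) * (?v + 2)"
    using heights ER.IH(2) by (intro mult_le_mono) auto
  moreover have "eht ht d' * (vartheta sz ht d' s + 2) \<le> (?m - 1) * (?v + 2)"
    using heights ER.IH(1) by (intro mult_le_mono) auto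
  moreover have "?m * (?v + 2) = (?m - 1) * (?v + 2) + (?v + 2)"
    using eht_pos[OF ht_pos \<open>in_E D d\<close>] by (metis Suc_diff_1 add.commute mult_Suc)
  ultimately show ?case
    unfolding vartheta.simps esize.simps max.bounded_iff by linarith
qed auto

lemma rtranclp_estep_vartheta_le:
  assumes "abstract_system D sz ht st" and "bounded sz D s"
  shows "(estep D st)\<^sup>*\<^sup>* d d' \<Longrightarrow> vartheta sz ht d' s \<le> vartheta sz ht d s"
  by (induction rule: rtranclp_induct)
    (use estep_vartheta_le[OF assms] in fastforce)+

theorem mainTheorem6:
  fixes D :: "'d set" and sz ht :: "'d \<Rightarrow> nat" and st :: "'d \<Rightarrow> 'd \<Rightarrow> bool"
    and s :: nat and d :: "'d eterm"
  assumes "abstract_system D sz ht st"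
    and "bounded sz D s"
    and "d \<in> EE D"
  shows "bounded (esize sz) {d' \<in> EE D. (estep D st)\<^sup>*\<^sup>* d d'} (vartheta sz ht d s)"
  unfolding bounded_def
proof
  fix d' assume "d' \<in> {d' \<in> EE D. (estep D st)\<^sup>*\<^sup>* d d'}"
  then have "in_E D d'" and reduct: "(estep D st)\<^sup>*\<^sup>* d d'" by (simp_all add: EE_def)
  have "\<forall>x\<in>D. 0 < ht x" using assms(1) by (simp add: abstract_system_def)
  then have "esize sz d' \<le> vartheta sz ht d' s"
    using esize_le_vartheta assms(2) \<open>in_E D d'\<close> by blast
  also have "\<dots> \<le> vartheta sz ht d s"
    using rtranclp_estep_vartheta_le[OF assms(1,2) reduct] .
  finally show "esize sz d' \<le> vartheta sz ht d s" .
qed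

end
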